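(* Let $X$ be a uniform space and let $f \colon X \to X$ be a uniformly continuous map. Let $Y$ be a subset of $X$ such that $Y$ and $f(Y)$ are both closed in $X$. Suppose that there is a net $(Z_i)_{i \in I}$ of subsets of $X$ such that $f(Z_i) \subset Z_i$ for all $i \in I$ and $(Z_i)$ converges to $Y$ in the Hausdorff-Bourbaki topology. Then $f(Y) \subset Y$.
   Context: For $V \subset X \times X$ and $A \subset X$, $V[A] = \{x \in X : (x,a) \in V \text{ for some } a \in A\}$. The Hausdorff-Bourbaki uniform structure on the set $\mathcal{P}(X)$ of all subsets of $X$ has as a base the sets $\widehat{V} = \{(A,B) : B \subset V[A] \text{ and } A \subset V[B]\}$, $V$ an entourage of $X$; the Hausdorff-Bourbaki topology is its associated topology. *)

theory Defs
  imports "HOL-Analysis.Analysis"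
begin

definition entourage :: "('a::uniform_space \<times> 'a) set \<Rightarrow> bool" where
  "entourage V \<longleftrightarrow> eventually (\<lambda>p. p \<in> V) uniformity"

definition ent_image :: "('a \<times> 'a) set \<Rightarrow> 'a set \<Rightarrow> 'a set" where
  "ent_image V A = {x. \<exists>a\<in>A. (x, a) \<in> V}"

definition hb_entourage :: "('a \<times> 'a) set \<Rightarrow> ('a set \<times> 'a set) set" where
  "hb_entourage V = {(A, B). B \<subseteq> ent_image V A \<and> A \<subseteq> ent_image V B}"

definition directed_set :: "'i set \<Rightarrow> ('i \<Rightarrow> 'i \<Rightarrow> bool) \<Rightarrow> bool" where
  "directed_set I le \<longleftrightarrow> I \<noteq> {} \<and> (\<forall>i\<in>I. le i i) \<and>
     (\<forall>i\<in>I. \<forall>j\<in>I. \<forall>k\<in>I. le i j \<longrightarrow> le j k \<longrightarrow> le i k) \<and>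
     (\<forall>i\<in>I. \<forall>j\<in>I. \<exists>k\<in>I. le i k \<and> le j k)"

definition hb_net_converges ::
  "'i set \<Rightarrow> ('i \<Rightarrow> 'i \<Rightarrow> bool) \<Rightarrow> ('i \<Rightarrow> 'a::uniform_space set) \<Rightarrow> 'a set \<Rightarrow> bool" where
  "hb_net_converges I le Z Y \<longleftrightarrow>
     (\<forall>V. entourage V \<longrightarrow>
        (\<exists>i0\<in>I. \<forall>i\<in>I. le i0 i \<longrightarrow> (Z i, Y) \<in> hb_entourage V))"

end

theory Submission
  imports Defs
begin

text \<open>Let \<open>y \<in> Y\<close> and \<open>W\<close> an entourage; pick \<open>U\<close> with \<open>U \<circ> U \<subseteq> W\<close> and \<open>V \<subseteq> U\<close> such that
  \<open>f\<close> maps \<open>V\<close>-close points to \<open>U\<close>-close points. Some \<open>Z\<^sub>i\<close> is \<open>V\<close>-close to \<open>Y\<close>, so \<open>y\<close> is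
  \<open>V\<close>-close to some \<open>z \<in> Z\<^sub>i\<close>, and \<open>f z \<in> Z\<^sub>i\<close> is \<open>V\<close>-close to some \<open>y' \<in> Y\<close>. Hence \<open>f y\<close> is
  \<open>W\<close>-close to \<open>y'\<close>; as \<open>W\<close> is arbitrary, \<open>f y\<close> lies in the closure of \<open>Y\<close>, which is \<open>Y\<close>.
  Closedness of \<open>f ` Y\<close> and all but one index of the net are not needed.\<close>

lemma entourage_relcomp_half:
  assumes "entourage W"
  obtains U where "entourage U" "U O U \<subseteq> W"
proof -
  obtain D where "eventually D uniformity" "\<And>x y z. D (x, y) \<Longrightarrow> D (y, z) \<Longrightarrow> (x, z) \<in> W"
    using uniformity_transE[OF assms[unfolded entourage_def]] by blast
  then show thesis
    by (intro that[of "{p. D p}"]) (auto simp: entourage_def)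
qed

lemma entourage_uniformly_continuous_preimage:
  assumes "uniformly_continuous_on UNIV f" and "entourage W"
  shows "entourage {(x, y). (x, y) \<in> W \<and> (f x, f y) \<in> W}"
proof -
  have "eventually (\<lambda>(x, y). (f x, f y) \<in> W) uniformity"
    using uniformly_continuous_onD[OF assms(1) assms(2)[unfolded entourage_def]] by simp
  with assms(2) show ?thesis
    unfolding entourage_def by eventually_elim auto
qed

lemma closed_ent_image_entourages:
  fixes Y :: "'a::uniform_space set"
  assumes "closed Y" and "\<And>W. entourage W \<Longrightarrow> x \<in> ent_image W Y"
  shows "x \<in> Y"
proof (rule ccontr)
  assume "x \<notin> Y"
  moreover have "open (- Y)" using assms(1) by auto
  ultimately have "eventually (\<lambda>(x', y). x' = x \<longrightarrow> y \<notin> Y) uniformity"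
    by (simp add: open_uniformity)
  then have "entourage {(x', y). x' = x \<longrightarrow> y \<notin> Y}"
    by (simp add: entourage_def case_prod_unfold)
  from assms(2)[OF this] show False
    by (auto simp: ent_image_def)
qed

lemma hb_net_converges_exists_close:
  assumes "directed_set I le" and "hb_net_converges I le Z Y" and "entourage V"
  obtains i where "i \<in> I" "(Z i, Y) \<in> hb_entourage V"
  using assms unfolding directed_set_def hb_net_converges_def by meson

lemma invariant_hb_close_image_subset:
  assumes "(A, Y) \<in> hb_entourage V" and "f ` A \<subseteq> A"
    and "V \<subseteq> U" and "\<And>x y. (x, y) \<in> V \<Longrightarrow> (f x, f y) \<in> U"
  shows "f ` Y \<subseteq> ent_image (U O U) Y"
proof
  fix w assume "w \<in> f ` Y"
  then obtain y where "y \<in> Y" "w = f y" by blast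
  then obtain z where z: "z \<in> A" "(y, z) \<in> V"
    using assms(1) by (auto simp: hb_entourage_def ent_image_def)
  with assms(2) have "f z \<in> A" by blast
  then obtain y' where "y' \<in> Y" "(f z, y') \<in> V"
    using assms(1) by (auto simp: hb_entourage_def ent_image_def)
  moreover have "(f y, f z) \<in> U" using z(2) assms(4) by blast
  ultimately show "w \<in> ent_image (U O U) Y"
    using \<open>w = f y\<close> assms(3) by (auto simp: ent_image_def)
qed

theorem corollary3p6:
  fixes f :: "'a::uniform_space \<Rightarrow> 'a"
    and Y :: "'a set"
    and I :: "'i set" and le :: "'i \<Rightarrow> 'i \<Rightarrow> bool"
    and Z :: "'i \<Rightarrow> 'a set"
  assumes "uniformly_continuous_on UNIV f"
    and "closed Y" and "closed (f ` Y)"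
    and "directed_set I le"
    and "\<forall>i\<in>I. f ` Z i \<subseteq> Z i"
    and "hb_net_converges I le Z Y"
  shows "f ` Y \<subseteq> Y"
proof
  fix w assume w: "w \<in> f ` Y"
  show "w \<in> Y"
  proof (rule closed_ent_image_entourages[OF assms(2)])
    fix W :: "('a \<times> 'a) set" assume "entourage W"
    then obtain U where U: "entourage U" "U O U \<subseteq> W"
      by (rule entourage_relcomp_half)
    define V where "V = {(x, y). (x, y) \<in> U \<and> (f x, f y) \<in> U}"
    have "entourage V"
      unfolding V_def by (rule entourage_uniformly_continuous_preimage[OF assms(1) U(1)])
    with assms(4,6) obtain i where "i \<in> I" "(Z i, Y) \<in> hb_entourage V"
      by (rule hb_net_converges_exists_close)
    then have "f ` Y \<subseteq> ent_image (U O U) Y"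
      using assms(5) by (intro invariant_hb_close_image_subset) (auto simp: V_def)
    with w U(2) show "w \<in> ent_image W Y"
      unfolding ent_image_def by blast
  qed
qed

end
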